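(* Let $0<\alpha<1$, $T>0$, $N_T$ a positive integer, $\Delta t=T/N_T$, $t_k=k\Delta t$. Let $\varepsilon>0$ and let $s_i>0,\ \omega_i>0$ ($i=1,\dots,N_{\mathrm{exp}}$) satisfy $\left|t^{-1-\alpha}-\sum_{i=1}^{N_{\mathrm{exp}}}\omega_ie^{-s_it}\right|\leq\varepsilon$ for all $t\in[\Delta t,T]$. Let $1\leq n\leq N_T$, let $u\in C^2[0,t_n]$ and set $u^k=u(t_k)$. Then $$\left|{}_0^C D_t^\alpha u(t)\big|_{t=t_n}-{}^{FC}_{0}\mathbb{D}_t^\alpha u^n\right|\leq\frac{\Delta t^{2-\alpha}}{\Gamma(2-\alpha)}\left(\frac{1-\alpha}{12}+\frac{2^{2-\alpha}}{2-\alpha}-(1+2^{-\alpha})\right)\max_{0\leq t\leq t_n}|u''(t)|+\frac{\alpha\varepsilon\, t_{n-1}}{\Gamma(1-\alpha)}\max_{0\leq t\leq t_{n-1}}|u(t)|.$$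
   Context: The Caputo derivative of order $\alpha\in(0,1)$ is ${}_0^C D_t^\alpha u(t)=\frac{1}{\Gamma(1-\alpha)}\int_0^t\frac{u'(\tau)}{(t-\tau)^\alpha}d\tau$. For values $u^0,\dots,u^{N_T}$ on the grid $t_k=k\Delta t$, let $\Pi_{1,l}u(\tau)=u^{l-1}\frac{t_l-\tau}{\Delta t}+u^l\frac{\tau-t_{l-1}}{\Delta t}$ on $[t_{l-1},t_l]$, let $U_{i}(t_n)=\sum_{l=1}^{n-1}\int_{t_{l-1}}^{t_l}e^{-s_i(t_n-\tau)}\Pi_{1,l}u(\tau)\,d\tau$ (empty sum $=0$ when $n=1$), and define the fast approximation, for $1\le n\le N_T$, $${}^{FC}_{0}\mathbb{D}_t^\alpha u^n=\frac{u^n-u^{n-1}}{\Delta t^\alpha\Gamma(2-\alpha)}+\frac{1}{\Gamma(1-\alpha)}\left[\frac{u^{n-1}}{\Delta t^\alpha}-\frac{u^0}{t_n^\alpha}-\alpha\sum_{i=1}^{N_{\mathrm{exp}}}\omega_iU_i(t_n)\right].$$ (For $n=1$ this equals $\frac{u^1-u^0}{\Delta t^\alpha\Gamma(2-\alpha)}$.) *)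

theory Defs
  imports "HOL-Analysis.Analysis"
begin

text \<open>Caputo derivative of order alpha at time t, for a function whose derivative
  (on [0,t]) is the given function du.\<close>
definition caputo :: "real \<Rightarrow> (real \<Rightarrow> real) \<Rightarrow> real \<Rightarrow> real" where
  "caputo \<alpha> du t = (1 / Gamma (1 - \<alpha>)) * integral {0..t} (\<lambda>\<tau>. du \<tau> / (t - \<tau>) powr \<alpha>)"

definition Pi1 :: "real \<Rightarrow> (nat \<Rightarrow> real) \<Rightarrow> nat \<Rightarrow> real \<Rightarrow> real" where
  "Pi1 dt uv l \<tau> = uv (l - 1) * (real l * dt - \<tau>) / dt + uv l * (\<tau> - real (l - 1) * dt) / dt"

definition Uhist :: "real \<Rightarrow> (nat \<Rightarrow> real) \<Rightarrow> real \<Rightarrow> nat \<Rightarrow> real" where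
  "Uhist dt uv si n = (\<Sum>l = 1..n - 1.
      integral {real (l - 1) * dt .. real l * dt}
        (\<lambda>\<tau>. exp (- si * (real n * dt - \<tau>)) * Pi1 dt uv l \<tau>))"

definition fast_caputo :: "real \<Rightarrow> real \<Rightarrow> nat \<Rightarrow> (nat \<Rightarrow> real) \<Rightarrow> (nat \<Rightarrow> real)
    \<Rightarrow> (nat \<Rightarrow> real) \<Rightarrow> nat \<Rightarrow> real" where
  "fast_caputo \<alpha> dt Nexp s \<omega> uv n =
     (uv n - uv (n - 1)) / (dt powr \<alpha> * Gamma (2 - \<alpha>))
     + (1 / Gamma (1 - \<alpha>)) *
       (uv (n - 1) / dt powr \<alpha> - uv 0 / (real n * dt) powr \<alpha>
        - \<alpha> * (\<Sum>i = 1..Nexp. \<omega> i * Uhist dt uv (s i) n))"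

end

theory Submission
  imports Defs
begin

text \<open>Split the Caputo integral at \<open>t\<^sub>n\<^sub>-\<^sub>1\<close>. On the last cell the scheme replaces \<open>u'\<close> by
  the difference quotient; integrating the error by parts against \<open>(t\<^sub>n - \<tau>)\<^sup>-\<^sup>\<alpha>\<close> and using
  \<open>|u - \<Pi>\<^sub>1u| \<le> M/2 (\<tau> - t\<^sub>l\<^sub>-\<^sub>1)(t\<^sub>l - \<tau>)\<close> gives an \<open>O(\<Delta>t\<^sup>2\<^sup>-\<^sup>\<alpha>)\<close> remainder. On \<open>[0, t\<^sub>n\<^sub>-\<^sub>1]\<close>
  one integrates by parts to obtain the kernel \<open>(t\<^sub>n - \<tau>)\<^sup>-\<^sup>1\<^sup>-\<^sup>\<alpha>\<close>, which the fast scheme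
  applies to \<open>\<Pi>\<^sub>1u\<close> through the sum of exponentials. The error there splits into the
  interpolation error, bounded cell by cell and summed with \<open>\<alpha> \<Sum>\<^sub>j\<^sub>\<ge>\<^sub>2 j\<^sup>-\<^sup>1\<^sup>-\<^sup>\<alpha> \<le> 1\<close>,
  and the sum-of-exponentials error, at most \<open>\<epsilon>\<close> times \<open>max |u|\<close> per unit length.\<close>

abbreviation grid_cell :: "real \<Rightarrow> nat \<Rightarrow> real set" where
  "grid_cell h l \<equiv> {real (l - 1) * h .. real l * h}"

definition lin_interp :: "(real \<Rightarrow> real) \<Rightarrow> real \<Rightarrow> real \<Rightarrow> real \<Rightarrow> real" where
  "lin_interp u a b y = (u a * (b - y) + u b * (y - a)) / (b - a)"

definition sum_of_exponentials :: "nat \<Rightarrow> (nat \<Rightarrow> real) \<Rightarrow> (nat \<Rightarrow> real) \<Rightarrow> real \<Rightarrow> real" where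
  "sum_of_exponentials Nexp s \<omega> t = (\<Sum>i = 1..Nexp. \<omega> i * exp (- s i * t))"

text \<open>\<open>penultimate_weight \<alpha> = \<integral>\<^sub>0\<^sup>1 \<sigma> (1 - \<sigma>) (2 - \<sigma>)\<^sup>-\<^sup>\<alpha>\<^sup>-\<^sup>1 d\<sigma>\<close>, the weight of the cell
  \<open>[t\<^sub>n\<^sub>-\<^sub>2, t\<^sub>n\<^sub>-\<^sub>1]\<close> in the interpolation error.\<close>
definition penultimate_weight :: "real \<Rightarrow> real" where
  "penultimate_weight \<alpha> = (1 - 4 * 2 powr (- \<alpha>)) / (2 - \<alpha>) - 3 * (1 - 2 * 2 powr (- \<alpha>)) / (1 - \<alpha>)
     - 2 * (1 - 2 powr (- \<alpha>)) / \<alpha>"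

lemma has_real_derivative_zero_between:
  fixes f f' :: "real \<Rightarrow> real"
  assumes "a < b" "f a = f b" "{a..b} \<subseteq> S"
    and deriv: "\<And>y. y \<in> S \<Longrightarrow> (f has_real_derivative f' y) (at y within S)"
  obtains \<xi> where "a < \<xi>" "\<xi> < b" "f' \<xi> = 0"
proof -
  have "(f has_derivative (\<lambda>v. f' y * v)) (at y within {a..b})" if "a \<le> y" "y \<le> b" for y
  proof -
    have "y \<in> S" using assms(3) that by auto
    from DERIV_subset[OF deriv[OF this] assms(3)] show ?thesis
      by (simp add: has_field_derivative_def)
  qed
  then obtain \<xi> where "\<xi> \<in> {a<..<b}" "f b - f a = f' \<xi> * (b - a)"
    using mvt_simple[OF assms(1), of f "\<lambda>y v. f' y * v"] by blast
  with assms(1,2) that show ?thesis by auto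
qed

lemma linear_interpolation_error:
  fixes u du ddu :: "real \<Rightarrow> real"
  assumes ab: "a < b" and x: "x \<in> {a..b}"
    and d1: "\<And>y. y \<in> {a..b} \<Longrightarrow> (u has_real_derivative du y) (at y within {a..b})"
    and d2: "\<And>y. y \<in> {a..b} \<Longrightarrow> (du has_real_derivative ddu y) (at y within {a..b})"
    and M: "\<And>y. y \<in> {a..b} \<Longrightarrow> \<bar>ddu y\<bar> \<le> M"
  shows "\<bar>u x - lin_interp u a b x\<bar> \<le> M / 2 * ((x - a) * (b - x))"
proof (cases "x = a \<or> x = b")
  case True
  then show ?thesis using ab by (auto simp: lin_interp_def field_simps)
next
  case False
  with x have ax: "a < x" and xb: "x < b" by auto
  define c where "c = (u x - lin_interp u a b x) / ((x - a) * (b - x))"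
  define \<phi> where "\<phi> y = u y - lin_interp u a b y - c * ((y - a) * (b - y))" for y
  define \<phi>' where "\<phi>' y = du y - (u b - u a) / (b - a) - c * (a + b - 2 * y)" for y
  \<comment> \<open>\<open>\<phi>\<close> vanishes at \<open>a, x, b\<close>, so by Rolle twice \<open>\<phi>'' = ddu + 2c\<close> vanishes somewhere.\<close>
  have d\<phi>: "(\<phi> has_real_derivative \<phi>' y) (at y within {a..b})" if "y \<in> {a..b}" for y
    unfolding \<phi>_def \<phi>'_def lin_interp_def using ab
    by (auto intro!: derivative_eq_intros d1[OF that])
  have d\<phi>': "(\<phi>' has_real_derivative ddu y + 2 * c) (at y within {a..b})" if "y \<in> {a..b}" for y
    unfolding \<phi>'_def by (auto intro!: derivative_eq_intros d2[OF that])
  have "\<phi> a = 0" "\<phi> b = 0" using ab by (simp_all add: \<phi>_def lin_interp_def)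
  moreover have "\<phi> x = 0" using ax xb by (simp add: \<phi>_def c_def)
  ultimately obtain \<xi>1 \<xi>2 where \<xi>: "a < \<xi>1" "\<xi>1 < x" "\<phi>' \<xi>1 = 0" "x < \<xi>2" "\<xi>2 < b" "\<phi>' \<xi>2 = 0"
    using has_real_derivative_zero_between[where a = a and b = x, OF ax _ _ d\<phi>]
      has_real_derivative_zero_between[where a = x and b = b, OF xb _ _ d\<phi>] ax xb
    by (metis atLeastatMost_subset_iff order.refl less_imp_le)
  obtain \<eta> where \<eta>: "\<xi>1 < \<eta>" "\<eta> < \<xi>2" "ddu \<eta> + 2 * c = 0"
    by (rule has_real_derivative_zero_between[where a = \<xi>1 and b = \<xi>2, OF _ _ _ d\<phi>'])
      (use \<xi> in auto)
  then have "\<bar>c\<bar> \<le> M / 2" using M[of \<eta>] \<xi> by auto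
  moreover have "u x - lin_interp u a b x = c * ((x - a) * (b - x))" using ax xb by (simp add: c_def)
  moreover have "0 < (x - a) * (b - x)" using ax xb by simp
  ultimately show ?thesis by (metis abs_mult abs_of_pos mult_right_mono less_imp_le)
qed

lemma has_real_derivative_powr_diff:
  fixes b y p :: real
  assumes "y < b"
  shows "((\<lambda>y. (b - y) powr p) has_real_derivative - p * (b - y) powr (p - 1)) (at y)"
  using assms by (auto intro!: derivative_eq_intros)

lemma has_integral_powr_kernel:
  fixes a b p :: real
  assumes ab: "a \<le> b" and p: "0 < p"
  shows "((\<lambda>y. (b - y) powr (p - 1)) has_integral (b - a) powr p / p) {a..b}"
proof -
  have "((\<lambda>y. (b - y) powr (p - 1)) has_integral
          (\<lambda>y. - ((b - y) powr p) / p) b - (\<lambda>y. - ((b - y) powr p) / p) a) {a..b}"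
  proof (rule fundamental_theorem_of_calculus_interior_strong[of "{}"])
    show "continuous_on {a..b} (\<lambda>y. - ((b - y) powr p) / p)"
      using p by (auto intro!: continuous_intros continuous_on_powr')
    fix y assume "y \<in> {a<..<b} - {}"
    then have "((\<lambda>y. - ((b - y) powr p) / p) has_real_derivative - (- p * (b - y) powr (p - 1)) / p) (at y)"
      by (intro DERIV_cdivide DERIV_minus has_real_derivative_powr_diff) auto
    then show "((\<lambda>y. - ((b - y) powr p) / p) has_vector_derivative (b - y) powr (p - 1)) (at y)"
      using p by (simp add: has_real_derivative_iff_has_vector_derivative)
  qed (use ab in auto)
  then show ?thesis using p by simp
qed

lemma powr_neg_decrement_lower:
  fixes k \<alpha> :: real
  assumes k: "1 < k" and \<alpha>: "0 < \<alpha>"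
  shows "\<alpha> * k powr (- \<alpha> - 1) \<le> (k - 1) powr (- \<alpha>) - k powr (- \<alpha>)"
proof -
  have "DERIV (\<lambda>y. y powr (- \<alpha>)) x :> - \<alpha> * x powr (- \<alpha> - 1)" if "k - 1 \<le> x" "x \<le> k" for x
    using k that by (auto intro!: derivative_eq_intros)
  from MVT2[of "k - 1" k, OF _ this] obtain z where z: "k - 1 < z" "z < k"
    "k powr (- \<alpha>) - (k - 1) powr (- \<alpha>) = (k - (k - 1)) * (- \<alpha> * z powr (- \<alpha> - 1))" by auto
  have "k powr (- \<alpha> - 1) \<le> z powr (- \<alpha> - 1)"
    using z k \<alpha> by (intro powr_mono2') auto
  then have "\<alpha> * k powr (- \<alpha> - 1) \<le> \<alpha> * z powr (- \<alpha> - 1)" using \<alpha> by (simp add: mult_left_mono)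
  then show ?thesis using z(3) by simp
qed

lemma mult_sum_powr_neg_le_1:
  fixes \<alpha> :: real and n :: nat
  assumes \<alpha>: "0 < \<alpha>"
  shows "\<alpha> * (\<Sum>l = 1..n - 2. real (n - l) powr (- \<alpha> - 1)) \<le> 1"
proof -
  define F where "F l = real (n - l) powr (- \<alpha>)" for l
  have F01: "0 \<le> F l \<and> F l \<le> 1" for l
  proof (cases "n - l = 0")
    case False
    then have "1 \<le> real (n - l)" by simp
    then show ?thesis unfolding F_def using \<alpha>
      by (metis powr_ge_zero powr_mono2' powr_one_eq_one neg_le_0_iff_le less_imp_le zero_less_one)
  qed (simp add: F_def)
  have "\<alpha> * (\<Sum>l = 1..n - 2. real (n - l) powr (- \<alpha> - 1))
      = (\<Sum>l = 1..n - 2. \<alpha> * real (n - l) powr (- \<alpha> - 1))"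
    by (simp add: sum_distrib_left)
  also have "\<dots> \<le> (\<Sum>l = 1..n - 2. F (Suc l) - F l)"
  proof (rule sum_mono)
    fix l assume l: "l \<in> {1..n - 2}"
    then have "1 < real (n - l)" "real (n - Suc l) = real (n - l) - 1" by auto
    then show "\<alpha> * real (n - l) powr (- \<alpha> - 1) \<le> F (Suc l) - F l"
      unfolding F_def using powr_neg_decrement_lower[of "real (n - l)" \<alpha>] \<alpha> by (simp only:)
  qed
  also have "\<dots> = F (Suc (n - 2)) - F 1" by (rule sum_Suc_diff) simp
  also have "\<dots> \<le> 1" using F01[of "Suc (n - 2)"] F01[of 1] by linarith
  finally show ?thesis .
qed

lemma abs_convex_combination_le:
  fixes x y p q K :: real
  assumes "0 \<le> p" "0 \<le> q" "p + q = 1" "\<bar>x\<bar> \<le> K" "\<bar>y\<bar> \<le> K"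
  shows "\<bar>x * p + y * q\<bar> \<le> K"
proof -
  have "\<bar>x * p + y * q\<bar> \<le> \<bar>x\<bar> * p + \<bar>y\<bar> * q"
    using assms(1,2) by (metis abs_mult abs_of_nonneg abs_triangle_ineq)
  also have "\<dots> \<le> K * p + K * q" using assms by (intro add_mono mult_right_mono) auto
  also have "\<dots> = K" using assms(3) by (simp add: distrib_left[symmetric])
  finally show ?thesis .
qed

lemma abs_le_SUP_abs:
  fixes f :: "real \<Rightarrow> real"
  assumes "continuous_on {a..b} f" "x \<in> {a..b}"
  shows "\<bar>f x\<bar> \<le> (SUP t\<in>{a..b}. \<bar>f t\<bar>)"
  by (intro cSUP_upper assms bounded_imp_bdd_above compact_imp_bounded compact_continuous_image
      continuous_intros compact_Icc)

lemma Gamma_2_minus: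
  fixes \<alpha> :: real
  assumes "\<alpha> < 1"
  shows "Gamma (2 - \<alpha>) = (1 - \<alpha>) * Gamma (1 - \<alpha>)"
proof -
  have "1 - \<alpha> \<notin> \<int>\<^sub>\<le>\<^sub>0" using assms by (auto dest: nonpos_Ints_nonpos)
  then have "Gamma ((1 - \<alpha>) + 1) = (1 - \<alpha>) * Gamma (1 - \<alpha>)" by (rule Gamma_plus1)
  then show ?thesis by (simp add: algebra_simps)
qed

lemma grid_cell_subset:
  assumes "l \<le> m" "0 \<le> h"
  shows "grid_cell h l \<subseteq> {0 .. real m * h}"
  using assms by (auto intro: order_trans[OF _ mult_right_mono[of "real l" "real m" h]])

lemma grid_cell_history_gap:
  assumes "l \<in> {1..n - 1}" "\<tau> \<in> grid_cell h l" "0 \<le> h"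
  shows "h \<le> real n * h - \<tau>"
proof -
  have "real l \<le> real n - 1" using assms(1) by auto
  then have "real l * h \<le> (real n - 1) * h" using assms(3) by (intro mult_right_mono) auto
  then show ?thesis using assms(2) by (simp add: algebra_simps)
qed

lemma Pi1_eq_lin_interp:
  assumes "1 \<le> l"
  shows "Pi1 h (\<lambda>k. u (real k * h)) l y = lin_interp u (real (l - 1) * h) (real l * h) y"
proof -
  have "real l * h - real (l - 1) * h = h" using assms by (simp add: of_nat_diff algebra_simps)
  then show ?thesis by (simp add: Pi1_def lin_interp_def add_divide_distrib)
qed

lemma abs_Pi1_le:
  assumes h: "0 < h" and l: "1 \<le> l" and \<tau>: "\<tau> \<in> grid_cell h l"
    and K: "\<bar>uv (l - 1)\<bar> \<le> K" "\<bar>uv l\<bar> \<le> K"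
  shows "\<bar>Pi1 h uv l \<tau>\<bar> \<le> K"
proof -
  have "\<bar>uv (l - 1) * ((real l * h - \<tau>) / h) + uv l * ((\<tau> - real (l - 1) * h) / h)\<bar> \<le> K"
  proof (rule abs_convex_combination_le[OF _ _ _ K])
    show "0 \<le> (real l * h - \<tau>) / h" "0 \<le> (\<tau> - real (l - 1) * h) / h" using \<tau> h by auto
    have "real l * h - real (l - 1) * h = h" using l by (simp add: of_nat_diff algebra_simps)
    then show "(real l * h - \<tau>) / h + (\<tau> - real (l - 1) * h) / h = 1"
      using h by (simp add: add_divide_distrib[symmetric])
  qed
  then show ?thesis by (simp add: Pi1_def)
qed

lemma has_integral_grid_cells:
  fixes f :: "real \<Rightarrow> real" and v :: "nat \<Rightarrow> real"
  assumes h: "0 \<le> h"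
    and cells: "\<And>l. 1 \<le> l \<Longrightarrow> l \<le> m \<Longrightarrow> (f has_integral v l) (grid_cell h l)"
  shows "(f has_integral (\<Sum>l = 1..m. v l)) {0 .. real m * h}"
  using cells
proof (induction m)
  case 0
  then show ?case using has_integral_refl(1)[of f 0] by simp
next
  case (Suc m)
  have "(f has_integral (\<Sum>l = 1..m. v l)) {0 .. real m * h}"
    using Suc.IH Suc.prems by auto
  moreover have "(f has_integral v (Suc m)) {real m * h .. real (Suc m) * h}"
    using Suc.prems[of "Suc m"] by simp
  ultimately have "(f has_integral (\<Sum>l = 1..m. v l) + v (Suc m)) {0 .. real (Suc m) * h}"
    by (rule has_integral_combine[rotated 2]) (use h in \<open>auto intro: mult_right_mono\<close>)
  then show ?case by simp
qed

lemma integral_grid_cells: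
  fixes f :: "real \<Rightarrow> real"
  assumes "0 \<le> h" "f integrable_on {0 .. real m * h}"
  shows "integral {0 .. real m * h} f = (\<Sum>l = 1..m. integral (grid_cell h l) f)"
proof (intro integral_unique has_integral_grid_cells integrable_integral)
  fix l assume "1 \<le> l" "l \<le> m"
  then show "f integrable_on grid_cell h l"
    using integrable_on_subinterval[OF assms(2) grid_cell_subset] assms(1) by blast
qed (use assms in auto)

section \<open>Local errors on one cell\<close>

lemma continuous_on_times_singular_powr:
  fixes e :: "real \<Rightarrow> real"
  assumes \<alpha>: "\<alpha> < 1" and ce: "continuous_on {a..b} e"
    and bound: "\<And>y. y \<in> {a..b} \<Longrightarrow> \<bar>e y\<bar> \<le> C * (b - y)"
  shows "continuous_on {a..b} (\<lambda>y. e y * (b - y) powr (- \<alpha>))"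
  unfolding continuous_on_def
proof
  fix x assume x: "x \<in> {a..b}"
  show "((\<lambda>y. e y * (b - y) powr (- \<alpha>)) \<longlongrightarrow> e x * (b - x) powr (- \<alpha>)) (at x within {a..b})"
  proof (cases "x = b")
    case True
    \<comment> \<open>Near \<open>b\<close> the product is dominated by \<open>C (b - y)\<^sup>1\<^sup>-\<^sup>\<alpha>\<close>, which tends to \<open>0\<close>.\<close>
    have dom: "\<bar>e y * (b - y) powr (- \<alpha>)\<bar> \<le> C * (b - y) powr (1 - \<alpha>)" if y: "y \<in> {a..b}" "y \<noteq> b" for y
    proof -
      have "(b - y) * (b - y) powr (- \<alpha>) = (b - y) powr (1 - \<alpha>)"
        using powr_mult_base[of "b - y" "- \<alpha>"] y by simp
      moreover have "\<bar>e y\<bar> * (b - y) powr (- \<alpha>) \<le> C * (b - y) * (b - y) powr (- \<alpha>)"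
        by (rule mult_right_mono[OF bound[OF y(1)] powr_ge_zero])
      ultimately show ?thesis by (simp add: abs_mult mult.assoc)
    qed
    have "continuous_on {a..b} (\<lambda>y. (b - y) powr (1 - \<alpha>))"
      using \<alpha> by (intro continuous_on_powr' continuous_on_diff continuous_on_const continuous_on_id) auto
    then have "((\<lambda>y. C * (b - y) powr (1 - \<alpha>)) \<longlongrightarrow> C * (b - b) powr (1 - \<alpha>)) (at b within {a..b})"
      using x True unfolding continuous_on_def by (intro tendsto_mult_left) blast
    then have lim: "((\<lambda>y. C * (b - y) powr (1 - \<alpha>)) \<longlongrightarrow> 0) (at b within {a..b})" by simp
    have "\<forall>\<^sub>F y in at b within {a..b}. norm (e y * (b - y) powr (- \<alpha>)) \<le> C * (b - y) powr (1 - \<alpha>)"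
      unfolding eventually_at_filter real_norm_def by (rule always_eventually) (blast intro: dom)
    from Lim_null_comparison[OF this lim]
    have "((\<lambda>y. e y * (b - y) powr (- \<alpha>)) \<longlongrightarrow> 0) (at b within {a..b})" .
    then show ?thesis using True by simp
  next
    case False
    with x have "b - x \<noteq> 0" by auto
    then have "((\<lambda>y. (b - y) powr (- \<alpha>)) \<longlongrightarrow> (b - x) powr (- \<alpha>)) (at x within {a..b})"
      by (intro tendsto_powr tendsto_diff tendsto_const tendsto_ident_at)
    moreover have "(e \<longlongrightarrow> e x) (at x within {a..b})"
      using ce x unfolding continuous_on_def by blast
    ultimately show ?thesis by (intro tendsto_mult)
  qed
qed

lemma singular_remainder_bound:
  fixes e :: "real \<Rightarrow> real"
  assumes ab: "a < b" and \<alpha>: "0 < \<alpha>" "\<alpha> < 1" and ce: "continuous_on {a..b} e"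
    and ie: "\<And>y. y \<in> {a..b} \<Longrightarrow> \<bar>e y\<bar> \<le> M / 2 * ((y - a) * (b - y))"
  shows "(\<lambda>y. e y * (b - y) powr (- \<alpha> - 1)) integrable_on {a..b}"
    and "\<bar>integral {a..b} (\<lambda>y. e y * (b - y) powr (- \<alpha> - 1))\<bar>
           \<le> M / 2 * ((b - a) powr (2 - \<alpha>) / ((1 - \<alpha>) * (2 - \<alpha>)))"
proof -
  define g where "g y = e y * (b - y) powr (- \<alpha> - 1)" for y
  \<comment> \<open>\<open>k y = M/2 (y - a)(b - y)\<^sup>-\<^sup>\<alpha>\<close>, written as a combination of two integrable kernels.\<close>
  define k where "k y = M / 2 * ((b - a) * (b - y) powr ((1 - \<alpha>) - 1) - (b - y) powr ((2 - \<alpha>) - 1))"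
    for y
  have "(k has_integral M / 2 * ((b - a) * ((b - a) powr (1 - \<alpha>) / (1 - \<alpha>))
          - (b - a) powr (2 - \<alpha>) / (2 - \<alpha>))) {a..b}"
    unfolding k_def using ab \<alpha>
    by (intro has_integral_mult_right has_integral_diff has_integral_powr_kernel) auto
  moreover have "(b - a) * (b - a) powr (1 - \<alpha>) = (b - a) powr (2 - \<alpha>)"
    using powr_mult_base[of "b - a" "1 - \<alpha>"] ab by simp
  ultimately have hk: "(k has_integral M / 2 * ((b - a) powr (2 - \<alpha>) / ((1 - \<alpha>) * (2 - \<alpha>)))) {a..b}"
    using \<alpha> by (simp add: field_simps)
  have gk: "\<bar>g y\<bar> \<le> k y" if y: "y \<in> {a..b}" for y
  proof (cases "y = b")
    case False
    with y have yb: "0 < b - y" by auto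
    have p1: "(b - y) * (b - y) powr (- \<alpha> - 1) = (b - y) powr (- \<alpha>)"
      using powr_mult_base[of "b - y" "- \<alpha> - 1"] yb by simp
    have p2: "(b - y) * (b - y) powr (- \<alpha>) = (b - y) powr (1 - \<alpha>)"
      using powr_mult_base[of "b - y" "- \<alpha>"] yb by simp
    have "\<bar>g y\<bar> = \<bar>e y\<bar> * (b - y) powr (- \<alpha> - 1)" by (simp add: g_def abs_mult)
    also have "\<dots> \<le> M / 2 * ((y - a) * (b - y)) * (b - y) powr (- \<alpha> - 1)"
      by (rule mult_right_mono[OF ie[OF y]]) simp
    also have "\<dots> = M / 2 * (y - a) * ((b - y) * (b - y) powr (- \<alpha> - 1))"
      by (simp only: mult.assoc)
    also have "\<dots> = M / 2 * (y - a) * (b - y) powr (- \<alpha>)"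
      by (simp only: p1)
    also have "\<dots> = k y" by (simp add: k_def p2[symmetric] field_simps)
    finally show ?thesis .
  qed (simp add: g_def k_def)
  have "continuous_on {a<..<b} e" using ce by (rule continuous_on_subset) auto
  then have "g \<in> borel_measurable (lebesgue_on {a<..<b})"
    unfolding g_def by (intro continuous_imp_measurable_on_sets_lebesgue continuous_intros) auto
  moreover have "k integrable_on {a<..<b}"
    using hk integrable_on_Icc_iff_Ioo has_integral_integrable by blast
  ultimately have "g integrable_on {a<..<b}"
    by (rule measurable_bounded_by_integrable_imp_integrable_real) (use gk in auto)
  then have gint: "g integrable_on {a..b}" using integrable_on_Icc_iff_Ioo by blast
  then show "(\<lambda>y. e y * (b - y) powr (- \<alpha> - 1)) integrable_on {a..b}" by (simp add: g_def[abs_def])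
  have "norm (integral {a..b} g) \<le> integral {a..b} k"
    by (rule integral_norm_bound_integral[OF gint has_integral_integrable[OF hk]]) (use gk in auto)
  then show "\<bar>integral {a..b} (\<lambda>y. e y * (b - y) powr (- \<alpha> - 1))\<bar>
      \<le> M / 2 * ((b - a) powr (2 - \<alpha>) / ((1 - \<alpha>) * (2 - \<alpha>)))"
    using integral_unique[OF hk] by (simp add: g_def[abs_def])
qed

lemma L1_last_cell_error:
  fixes u du ddu :: "real \<Rightarrow> real"
  assumes ab: "a < b" and \<alpha>: "0 < \<alpha>" "\<alpha> < 1"
    and d1: "\<And>y. y \<in> {a..b} \<Longrightarrow> (u has_real_derivative du y) (at y within {a..b})"
    and d2: "\<And>y. y \<in> {a..b} \<Longrightarrow> (du has_real_derivative ddu y) (at y within {a..b})"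
    and M: "\<And>y. y \<in> {a..b} \<Longrightarrow> \<bar>ddu y\<bar> \<le> M"
  obtains R where "((\<lambda>\<tau>. du \<tau> * (b - \<tau>) powr (- \<alpha>)) has_integral
      (u b - u a) / (b - a) * ((b - a) powr (1 - \<alpha>) / (1 - \<alpha>)) + R) {a..b}"
    and "\<bar>R\<bar> \<le> \<alpha> * M / 2 * ((b - a) powr (2 - \<alpha>) / ((1 - \<alpha>) * (2 - \<alpha>)))"
proof -
  define d where "d = (u b - u a) / (b - a)"
  define e where "e y = u y - lin_interp u a b y" for y
  have ie: "\<bar>e y\<bar> \<le> M / 2 * ((y - a) * (b - y))" if "y \<in> {a..b}" for y
    unfolding e_def by (rule linear_interpolation_error[OF ab that d1 d2 M])
  have de: "(e has_real_derivative du y - d) (at y within {a..b})" if "y \<in> {a..b}" for y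
    unfolding e_def d_def lin_interp_def using ab by (auto intro!: derivative_eq_intros d1[OF that])
  have ce: "continuous_on {a..b} e" using de by (rule DERIV_continuous_on)
  have M0: "0 \<le> M" using M[of a] ab by auto
  have cG: "continuous_on {a..b} (\<lambda>y. e y * (b - y) powr (- \<alpha>))"
  proof (rule continuous_on_times_singular_powr[OF \<alpha>(2) ce])
    fix y assume y: "y \<in> {a..b}"
    have "M / 2 * ((y - a) * (b - y)) \<le> M / 2 * ((b - a) * (b - y))"
      using y M0 by (intro mult_left_mono mult_right_mono) auto
    then show "\<bar>e y\<bar> \<le> M / 2 * (b - a) * (b - y)" using ie[OF y] by (metis mult.assoc order_trans)
  qed
  \<comment> \<open>Integration by parts of \<open>e' (b - \<tau>)\<^sup>-\<^sup>\<alpha>\<close>; the boundary terms vanish since \<open>e a = e b = 0\<close>.\<close>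
  have "((\<lambda>y. (du y - d) * (b - y) powr (- \<alpha>) + \<alpha> * (e y * (b - y) powr (- \<alpha> - 1)))
      has_integral e b * (b - b) powr (- \<alpha>) - e a * (b - a) powr (- \<alpha>)) {a..b}"
  proof (rule fundamental_theorem_of_calculus_interior_strong[of "{}"])
    fix y assume "y \<in> {a<..<b} - {}"
    then have y: "a < y" "y < b" by auto
    have "(e has_real_derivative du y - d) (at y)"
      using de[of y] y at_within_interior[of y "{a..b}"] by auto
    from DERIV_mult[OF this has_real_derivative_powr_diff[OF y(2), where p = "- \<alpha>"]]
    show "((\<lambda>y. e y * (b - y) powr (- \<alpha>)) has_vector_derivative
        (du y - d) * (b - y) powr (- \<alpha>) + \<alpha> * (e y * (b - y) powr (- \<alpha> - 1))) (at y)"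
      by (simp add: has_real_derivative_iff_has_vector_derivative algebra_simps)
  qed (use ab cG in auto)
  moreover have "e a = 0" "e b = 0" using ab by (simp_all add: e_def lin_interp_def)
  ultimately have parts: "((\<lambda>y. (du y - d) * (b - y) powr (- \<alpha>) + \<alpha> * (e y * (b - y) powr (- \<alpha> - 1)))
      has_integral 0) {a..b}"
    by simp
  note rem = singular_remainder_bound[OF ab \<alpha> ce ie]
  have "((\<lambda>y. d * (b - y) powr (- \<alpha>)) has_integral d * ((b - a) powr (1 - \<alpha>) / (1 - \<alpha>))) {a..b}"
    using has_integral_mult_right[OF has_integral_powr_kernel[of a b "1 - \<alpha>"]] ab \<alpha> by simp
  from has_integral_add[OF has_integral_diff[OF parts
        has_integral_mult_right[OF integrable_integral[OF rem(1)], of \<alpha>]] this]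
  have "((\<lambda>\<tau>. du \<tau> * (b - \<tau>) powr (- \<alpha>)) has_integral d * ((b - a) powr (1 - \<alpha>) / (1 - \<alpha>))
      + - \<alpha> * integral {a..b} (\<lambda>y. e y * (b - y) powr (- \<alpha> - 1))) {a..b}"
    by (simp add: algebra_simps)
  moreover have "\<bar>- \<alpha> * integral {a..b} (\<lambda>y. e y * (b - y) powr (- \<alpha> - 1))\<bar>
      \<le> \<alpha> * M / 2 * ((b - a) powr (2 - \<alpha>) / ((1 - \<alpha>) * (2 - \<alpha>)))"
    using mult_left_mono[OF rem(2), of \<alpha>] \<alpha> by (simp add: abs_mult)
  ultimately show ?thesis unfolding d_def by (rule that)
qed

lemma has_integral_by_parts_kernel:
  fixes u du :: "real \<Rightarrow> real"
  assumes ab: "a \<le> b" and bc: "b < c"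
    and d1: "\<And>y. y \<in> {a..b} \<Longrightarrow> (u has_real_derivative du y) (at y within {a..b})"
  shows "((\<lambda>\<tau>. du \<tau> * (c - \<tau>) powr (- \<alpha>)) has_integral
           u b * (c - b) powr (- \<alpha>) - u a * (c - a) powr (- \<alpha>)
           - \<alpha> * integral {a..b} (\<lambda>\<tau>. u \<tau> * (c - \<tau>) powr (- \<alpha> - 1))) {a..b}"
proof -
  have "continuous_on {a..b} u" using d1 by (rule DERIV_continuous_on)
  then have int: "(\<lambda>\<tau>. u \<tau> * (c - \<tau>) powr (- \<alpha> - 1)) integrable_on {a..b}"
    using bc by (intro integrable_continuous_interval continuous_intros) auto
  have "((\<lambda>\<tau>. du \<tau> * (c - \<tau>) powr (- \<alpha>) + \<alpha> * (u \<tau> * (c - \<tau>) powr (- \<alpha> - 1))) has_integral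
          u b * (c - b) powr (- \<alpha>) - u a * (c - a) powr (- \<alpha>)) {a..b}"
  proof (rule fundamental_theorem_of_calculus[where f = "\<lambda>\<tau>. u \<tau> * (c - \<tau>) powr (- \<alpha>)"])
    fix y assume y: "y \<in> {a..b}"
    then have "y < c" using bc by auto
    from DERIV_mult[OF d1[OF y]
        has_field_derivative_at_within[OF has_real_derivative_powr_diff[OF this, where p = "- \<alpha>"]]]
    show "((\<lambda>\<tau>. u \<tau> * (c - \<tau>) powr (- \<alpha>)) has_vector_derivative
           du y * (c - y) powr (- \<alpha>) + \<alpha> * (u y * (c - y) powr (- \<alpha> - 1))) (at y within {a..b})"
      by (simp add: has_real_derivative_iff_has_vector_derivative algebra_simps)
  qed (use ab in auto)
  from has_integral_diff[OF this has_integral_mult_right[OF integrable_integral[OF int], of \<alpha>]]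
  show ?thesis by simp
qed

lemma integral_interp_error_kernel_bound:
  fixes u du ddu :: "real \<Rightarrow> real"
  assumes ab: "a < b" and bc: "b < c"
    and d1: "\<And>y. y \<in> {a..b} \<Longrightarrow> (u has_real_derivative du y) (at y within {a..b})"
    and d2: "\<And>y. y \<in> {a..b} \<Longrightarrow> (du has_real_derivative ddu y) (at y within {a..b})"
    and M: "\<And>y. y \<in> {a..b} \<Longrightarrow> \<bar>ddu y\<bar> \<le> M"
  shows "\<bar>integral {a..b} (\<lambda>\<tau>. (u \<tau> - lin_interp u a b \<tau>) * (c - \<tau>) powr (- \<alpha> - 1))\<bar>
         \<le> M / 2 * integral {a..b} (\<lambda>\<tau>. (\<tau> - a) * (b - \<tau>) * (c - \<tau>) powr (- \<alpha> - 1))"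
proof -
  have "continuous_on {a..b} u" using d1 by (rule DERIV_continuous_on)
  then have int: "(\<lambda>\<tau>. (u \<tau> - lin_interp u a b \<tau>) * (c - \<tau>) powr (- \<alpha> - 1)) integrable_on {a..b}"
    using ab bc unfolding lin_interp_def
    by (intro integrable_continuous_interval continuous_intros) auto
  have "(\<lambda>\<tau>. M / 2 * ((\<tau> - a) * (b - \<tau>) * (c - \<tau>) powr (- \<alpha> - 1))) integrable_on {a..b}"
    using bc by (intro integrable_continuous_interval continuous_intros) auto
  then have "norm (integral {a..b} (\<lambda>\<tau>. (u \<tau> - lin_interp u a b \<tau>) * (c - \<tau>) powr (- \<alpha> - 1)))
      \<le> integral {a..b} (\<lambda>\<tau>. M / 2 * ((\<tau> - a) * (b - \<tau>) * (c - \<tau>) powr (- \<alpha> - 1)))"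
  proof (rule integral_norm_bound_integral[OF int])
    fix x assume x: "x \<in> {a..b}"
    have "\<bar>u x - lin_interp u a b x\<bar> * (c - x) powr (- \<alpha> - 1)
        \<le> M / 2 * ((x - a) * (b - x)) * (c - x) powr (- \<alpha> - 1)"
      by (rule mult_right_mono[OF linear_interpolation_error[OF ab x d1 d2 M] powr_ge_zero])
    then show "norm ((u x - lin_interp u a b x) * (c - x) powr (- \<alpha> - 1))
        \<le> M / 2 * ((x - a) * (b - x) * (c - x) powr (- \<alpha> - 1))"
      by (simp add: abs_mult mult.assoc)
  qed
  then show ?thesis by simp
qed

section \<open>The bubble kernel \<open>(\<tau> - a)(b - \<tau>)(c - \<tau>)\<^sup>-\<^sup>\<alpha>\<^sup>-\<^sup>1\<close>\<close>

lemma integral_bubble_kernel_le: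
  fixes a b c \<alpha> :: real
  assumes ab: "a \<le> b" and bc: "b < c" and \<alpha>: "0 < \<alpha>"
  shows "integral {a..b} (\<lambda>\<tau>. (\<tau> - a) * (b - \<tau>) * (c - \<tau>) powr (- \<alpha> - 1))
         \<le> (b - a) ^ 3 / 6 * (c - b) powr (- \<alpha> - 1)"
proof -
  define P where "P \<tau> = (a + b) * \<tau>\<^sup>2 / 2 - \<tau> ^ 3 / 3 - a * b * \<tau>" for \<tau> :: real
  have "((\<lambda>\<tau>. (\<tau> - a) * (b - \<tau>)) has_integral P b - P a) {a..b}"
  proof (rule fundamental_theorem_of_calculus)
    fix x assume "x \<in> {a..b}"
    have "(P has_real_derivative (x - a) * (b - x)) (at x within {a..b})"
      unfolding P_def by (auto intro!: derivative_eq_intros simp: algebra_simps power2_eq_square)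
    then show "(P has_vector_derivative (x - a) * (b - x)) (at x within {a..b})"
      by (simp add: has_real_derivative_iff_has_vector_derivative)
  qed (use ab in auto)
  moreover have "P b - P a = (b - a) ^ 3 / 6"
    by (simp add: P_def power2_eq_square power3_eq_cube algebra_simps divide_simps)
  ultimately have hp: "((\<lambda>\<tau>. (\<tau> - a) * (b - \<tau>)) has_integral (b - a) ^ 3 / 6) {a..b}" by simp
  have "integral {a..b} (\<lambda>\<tau>. (\<tau> - a) * (b - \<tau>) * (c - \<tau>) powr (- \<alpha> - 1))
        \<le> integral {a..b} (\<lambda>\<tau>. (\<tau> - a) * (b - \<tau>) * (c - b) powr (- \<alpha> - 1))"
  proof (rule integral_le)
    show "(\<lambda>\<tau>. (\<tau> - a) * (b - \<tau>) * (c - \<tau>) powr (- \<alpha> - 1)) integrable_on {a..b}"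
      using bc by (intro integrable_continuous_interval continuous_intros) auto
    show "(\<lambda>\<tau>. (\<tau> - a) * (b - \<tau>) * (c - b) powr (- \<alpha> - 1)) integrable_on {a..b}"
      by (intro integrable_continuous_interval continuous_intros)
    fix x assume x: "x \<in> {a..b}"
    have "(c - x) powr (- \<alpha> - 1) \<le> (c - b) powr (- \<alpha> - 1)"
      using x bc \<alpha> by (intro powr_mono2') auto
    then show "(x - a) * (b - x) * (c - x) powr (- \<alpha> - 1) \<le> (x - a) * (b - x) * (c - b) powr (- \<alpha> - 1)"
      using x by (intro mult_left_mono) auto
  qed
  also have "\<dots> = (b - a) ^ 3 / 6 * (c - b) powr (- \<alpha> - 1)"
    using integral_unique[OF has_integral_mult_left[OF hp, of "(c - b) powr (- \<alpha> - 1)"]] by simp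
  finally show ?thesis .
qed

lemma has_real_derivative_bubble_antiderivative:
  fixes a b c \<alpha> \<tau> :: real
  assumes \<tau>: "\<tau> < c" and \<alpha>: "0 < \<alpha>" "\<alpha> < 1"
  shows "((\<lambda>\<tau>. (c - \<tau>) powr (2 - \<alpha>) / (2 - \<alpha>) - (2 * c - a - b) * (c - \<tau>) powr (1 - \<alpha>) / (1 - \<alpha>)
            - (c - a) * (c - b) * (c - \<tau>) powr (- \<alpha>) / \<alpha>)
          has_real_derivative (\<tau> - a) * (b - \<tau>) * (c - \<tau>) powr (- \<alpha> - 1)) (at \<tau>)"
proof -
  define y where "y = c - \<tau>"
  have y: "0 < y" using \<tau> by (simp add: y_def)
  have e1: "y powr (- \<alpha>) = y * y powr (- \<alpha> - 1)" using powr_mult_base[of y "- \<alpha> - 1"] y by simp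
  have e2: "y powr (1 - \<alpha>) = y * y powr (- \<alpha>)" using powr_mult_base[of y "- \<alpha>"] y by simp
  have deriv: "((\<lambda>\<tau>. (c - \<tau>) powr (2 - \<alpha>) / (2 - \<alpha>) - (2 * c - a - b) * (c - \<tau>) powr (1 - \<alpha>) / (1 - \<alpha>)
            - (c - a) * (c - b) * (c - \<tau>) powr (- \<alpha>) / \<alpha>)
      has_real_derivative - (2 - \<alpha>) * y powr (2 - \<alpha> - 1) / (2 - \<alpha>)
        - (2 * c - a - b) * (- (1 - \<alpha>) * y powr (1 - \<alpha> - 1)) / (1 - \<alpha>)
        - (c - a) * (c - b) * (- (- \<alpha>) * y powr (- \<alpha> - 1)) / \<alpha>) (at \<tau>)"
    unfolding y_def by (intro DERIV_diff DERIV_cdivide DERIV_cmult has_real_derivative_powr_diff \<tau>)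
  have cancel: "- (2 - \<alpha>) * X / (2 - \<alpha>) = - X" "Y * (- (1 - \<alpha>) * X) / (1 - \<alpha>) = - (Y * X)"
    "Y * (- (- \<alpha>) * X) / \<alpha> = Y * X" for X Y :: real
    using \<alpha> by (simp_all add: field_simps)
  have "- (2 - \<alpha>) * y powr (2 - \<alpha> - 1) / (2 - \<alpha>)
        - (2 * c - a - b) * (- (1 - \<alpha>) * y powr (1 - \<alpha> - 1)) / (1 - \<alpha>)
        - (c - a) * (c - b) * (- (- \<alpha>) * y powr (- \<alpha> - 1)) / \<alpha>
      = - (y powr (1 - \<alpha>)) + (2 * c - a - b) * y powr (- \<alpha>) - (c - a) * (c - b) * y powr (- \<alpha> - 1)"
    unfolding cancel by simp
  also have "\<dots> = (\<tau> - a) * (b - \<tau>) * (c - \<tau>) powr (- \<alpha> - 1)"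
    unfolding e2 e1 by (simp add: y_def algebra_simps)
  finally show ?thesis by (rule DERIV_cong[OF deriv])
qed

lemma has_integral_bubble_kernel_penultimate:
  fixes c h \<alpha> :: real
  assumes h: "0 < h" and \<alpha>: "0 < \<alpha>" "\<alpha> < 1"
  shows "((\<lambda>\<tau>. (\<tau> - (c - 2 * h)) * ((c - h) - \<tau>) * (c - \<tau>) powr (- \<alpha> - 1)) has_integral
           h powr (2 - \<alpha>) * penultimate_weight \<alpha>) {c - 2 * h .. c - h}"
proof -
  define F where "F \<tau> = (c - \<tau>) powr (2 - \<alpha>) / (2 - \<alpha>) - 3 * h * (c - \<tau>) powr (1 - \<alpha>) / (1 - \<alpha>)
      - 2 * h\<^sup>2 * (c - \<tau>) powr (- \<alpha>) / \<alpha>" for \<tau>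
  have coeff: "2 * c - (c - 2 * h) - (c - h) = 3 * h" "(c - (c - 2 * h)) * (c - (c - h)) = 2 * h\<^sup>2"
    by (simp_all add: algebra_simps power2_eq_square)
  have "((\<lambda>\<tau>. (\<tau> - (c - 2 * h)) * ((c - h) - \<tau>) * (c - \<tau>) powr (- \<alpha> - 1)) has_integral
          F (c - h) - F (c - 2 * h)) {c - 2 * h .. c - h}"
  proof (rule fundamental_theorem_of_calculus)
    fix \<tau> assume "\<tau> \<in> {c - 2 * h .. c - h}"
    then have "\<tau> < c" using h by auto
    from has_real_derivative_bubble_antiderivative[OF this \<alpha>, of "c - 2 * h" "c - h", unfolded coeff]
    show "(F has_vector_derivative (\<tau> - (c - 2 * h)) * ((c - h) - \<tau>) * (c - \<tau>) powr (- \<alpha> - 1))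
        (at \<tau> within {c - 2 * h .. c - h})"
      unfolding F_def[abs_def] has_real_derivative_iff_has_vector_derivative[symmetric]
      by (rule has_field_derivative_at_within)
  qed (use h in auto)
  moreover have "F (c - h) - F (c - 2 * h) = h powr (2 - \<alpha>) * penultimate_weight \<alpha>"
  proof -
    define P t where "P = h powr (2 - \<alpha>)" and "t = (2::real) powr (- \<alpha>)"
    have a1: "h * h powr (1 - \<alpha>) = P" using powr_mult_base[of h "1 - \<alpha>"] h by (simp add: P_def)
    have a2: "h * h powr (- \<alpha>) = h powr (1 - \<alpha>)" using powr_mult_base[of h "- \<alpha>"] h by simp
    have a3: "h\<^sup>2 * h powr (- \<alpha>) = P" using a1 a2 by (simp add: power2_eq_square mult.assoc)
    have b2: "2 * 2 powr (- \<alpha>) = (2::real) powr (1 - \<alpha>)" using powr_mult_base[of 2 "- \<alpha>"] by simp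
    have b1: "2 * 2 powr (1 - \<alpha>) = (2::real) powr (2 - \<alpha>)" using powr_mult_base[of 2 "1 - \<alpha>"] by simp
    have c1: "(2 * h) powr (2 - \<alpha>) = 4 * t * P" using b1 b2 h by (simp add: powr_mult P_def t_def)
    have c2: "h * (2 * h) powr (1 - \<alpha>) = 2 * t * P" using b2 a1 h by (simp add: powr_mult t_def mult_ac)
    have c3: "h\<^sup>2 * (2 * h) powr (- \<alpha>) = t * P" using a3 h by (simp add: powr_mult t_def mult_ac)
    have "F (c - h) = P / (2 - \<alpha>) - 3 * P / (1 - \<alpha>) - 2 * P / \<alpha>"
      using a1 a3 by (simp add: F_def P_def mult.assoc)
    moreover have "F (c - 2 * h) = 4 * t * P / (2 - \<alpha>) - 3 * (2 * t * P) / (1 - \<alpha>) - 2 * (t * P) / \<alpha>"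
      using c1 c2 c3 by (simp add: F_def mult.assoc)
    moreover have "2 - \<alpha> \<noteq> 0" "1 - \<alpha> \<noteq> 0" "\<alpha> \<noteq> 0" using \<alpha> by auto
    ultimately show ?thesis unfolding penultimate_weight_def P_def[symmetric] t_def[symmetric]
      by (simp add: divide_simps) (simp add: algebra_simps)
  qed
  ultimately show ?thesis by simp
qed

lemma penultimate_weight_nonneg:
  assumes "0 < \<alpha>" "\<alpha> < 1"
  shows "0 \<le> penultimate_weight \<alpha>"
  using has_integral_nonneg[OF has_integral_bubble_kernel_penultimate[OF zero_less_one assms, of 2]]
  by simp

lemma bubble_kernel_cell_le:
  assumes h: "0 < h" and \<alpha>: "0 < \<alpha>" and l: "1 \<le> l" "l < n"
  shows "integral (grid_cell h l) (\<lambda>\<tau>. (\<tau> - real (l - 1) * h) * (real l * h - \<tau>) * (real n * h - \<tau>) powr (- \<alpha> - 1))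
         \<le> h powr (2 - \<alpha>) / 6 * real (n - l) powr (- \<alpha> - 1)"
proof -
  have len: "real l * h - real (l - 1) * h = h" using l by (simp add: of_nat_diff algebra_simps)
  have gap: "real n * h - real l * h = real (n - l) * h" using l by (simp add: of_nat_diff algebra_simps)
  have h3: "h ^ 3 * h powr (- \<alpha> - 1) = h powr (2 - \<alpha>)"
    using h by (simp add: powr_add[symmetric] flip: powr_numeral)
  have "integral (grid_cell h l) (\<lambda>\<tau>. (\<tau> - real (l - 1) * h) * (real l * h - \<tau>) * (real n * h - \<tau>) powr (- \<alpha> - 1))
      \<le> h ^ 3 / 6 * (real (n - l) * h) powr (- \<alpha> - 1)"
    using integral_bubble_kernel_le[of "real (l - 1) * h" "real l * h" "real n * h" \<alpha>] len gap h \<alpha> l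
    by simp
  also have "\<dots> = (h ^ 3 * h powr (- \<alpha> - 1)) / 6 * real (n - l) powr (- \<alpha> - 1)"
    using h by (simp add: powr_mult algebra_simps)
  finally show ?thesis unfolding h3 .
qed

lemma bubble_kernel_history_sum:
  assumes h: "0 < h" and \<alpha>: "0 < \<alpha>" "\<alpha> < 1"
  shows "\<alpha> / 2 * (\<Sum>l = 1..n - 1. integral (grid_cell h l)
            (\<lambda>\<tau>. (\<tau> - real (l - 1) * h) * (real l * h - \<tau>) * (real n * h - \<tau>) powr (- \<alpha> - 1)))
         \<le> h powr (2 - \<alpha>) * (\<alpha> / 2 * penultimate_weight \<alpha> + 1 / 12)"
proof (cases "n < 2")
  case True
  then show ?thesis using penultimate_weight_nonneg[OF \<alpha>] \<alpha> by simp
next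
  case False
  define Q where "Q l = integral (grid_cell h l)
      (\<lambda>\<tau>. (\<tau> - real (l - 1) * h) * (real l * h - \<tau>) * (real n * h - \<tau>) powr (- \<alpha> - 1))" for l
  have "{1..n - 1} = insert (n - 1) {1..n - 2}" using False by auto
  then have split: "(\<Sum>l = 1..n - 1. Q l) = Q (n - 1) + (\<Sum>l = 1..n - 2. Q l)"
    by (simp only:) (subst sum.insert, auto)
  have "real (n - 1 - 1) * h = real n * h - 2 * h" "real (n - 1) * h = real n * h - h"
    using False by (simp_all add: of_nat_diff algebra_simps)
  then have last: "Q (n - 1) = h powr (2 - \<alpha>) * penultimate_weight \<alpha>"
    unfolding Q_def by (simp add: integral_unique[OF has_integral_bubble_kernel_penultimate[OF h \<alpha>]])
  have "(\<Sum>l = 1..n - 2. Q l) \<le> (\<Sum>l = 1..n - 2. h powr (2 - \<alpha>) / 6 * real (n - l) powr (- \<alpha> - 1))"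
    unfolding Q_def by (intro sum_mono bubble_kernel_cell_le[OF h \<alpha>(1)]) auto
  also have "\<dots> = h powr (2 - \<alpha>) / 6 * (\<Sum>l = 1..n - 2. real (n - l) powr (- \<alpha> - 1))"
    by (simp add: sum_distrib_left)
  finally have "\<alpha> / 2 * (\<Sum>l = 1..n - 2. Q l)
      \<le> h powr (2 - \<alpha>) / 12 * (\<alpha> * (\<Sum>l = 1..n - 2. real (n - l) powr (- \<alpha> - 1)))"
    using \<alpha> by (simp add: mult_left_mono mult_ac)
  also have "\<dots> \<le> h powr (2 - \<alpha>) / 12"
    using mult_left_mono[OF mult_sum_powr_neg_le_1[OF \<alpha>(1), of n], of "h powr (2 - \<alpha>) / 12"] by simp
  finally show ?thesis unfolding Q_def[symmetric] split last by (simp add: algebra_simps)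
qed

section \<open>The scheme on a uniform grid\<close>

lemma Gamma_mult_fast_caputo:
  fixes \<alpha> h :: real
  assumes \<alpha>: "\<alpha> < 1" and h: "0 < h"
  shows "Gamma (1 - \<alpha>) * fast_caputo \<alpha> h Nexp s \<omega> uv n
    = (uv n - uv (n - 1)) / (h powr \<alpha> * (1 - \<alpha>)) + uv (n - 1) / h powr \<alpha> - uv 0 / (real n * h) powr \<alpha>
      - \<alpha> * (\<Sum>l = 1..n - 1. integral (grid_cell h l)
               (\<lambda>\<tau>. Pi1 h uv l \<tau> * sum_of_exponentials Nexp s \<omega> (real n * h - \<tau>)))"
proof -
  have int: "(\<lambda>\<tau>. \<omega> i * (exp (- s i * (real n * h - \<tau>)) * Pi1 h uv l \<tau>)) integrable_on grid_cell h l"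
    for i l
    unfolding Pi1_def using h by (intro integrable_continuous_interval continuous_intros) auto
  have "(\<Sum>i = 1..Nexp. \<omega> i * Uhist h uv (s i) n) = (\<Sum>i = 1..Nexp. \<Sum>l = 1..n - 1.
      integral (grid_cell h l) (\<lambda>\<tau>. \<omega> i * (exp (- s i * (real n * h - \<tau>)) * Pi1 h uv l \<tau>)))"
    by (simp add: Uhist_def sum_distrib_left)
  also have "\<dots> = (\<Sum>l = 1..n - 1. \<Sum>i = 1..Nexp.
      integral (grid_cell h l) (\<lambda>\<tau>. \<omega> i * (exp (- s i * (real n * h - \<tau>)) * Pi1 h uv l \<tau>)))"
    by (rule sum.swap)
  also have "\<dots> = (\<Sum>l = 1..n - 1. integral (grid_cell h l)
      (\<lambda>\<tau>. Pi1 h uv l \<tau> * sum_of_exponentials Nexp s \<omega> (real n * h - \<tau>)))"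
  proof (rule sum.cong[OF refl])
    fix l
    have "integral (grid_cell h l) (\<lambda>\<tau>. Pi1 h uv l \<tau> * sum_of_exponentials Nexp s \<omega> (real n * h - \<tau>))
        = integral (grid_cell h l)
            (\<lambda>\<tau>. \<Sum>i = 1..Nexp. \<omega> i * (exp (- s i * (real n * h - \<tau>)) * Pi1 h uv l \<tau>))"
      by (simp add: sum_of_exponentials_def sum_distrib_left mult_ac)
    also have "\<dots> = (\<Sum>i = 1..Nexp.
        integral (grid_cell h l) (\<lambda>\<tau>. \<omega> i * (exp (- s i * (real n * h - \<tau>)) * Pi1 h uv l \<tau>)))"
      by (rule integral_sum) (simp_all only: finite_atLeastAtMost int)
    finally show "(\<Sum>i = 1..Nexp.
        integral (grid_cell h l) (\<lambda>\<tau>. \<omega> i * (exp (- s i * (real n * h - \<tau>)) * Pi1 h uv l \<tau>)))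
        = integral (grid_cell h l) (\<lambda>\<tau>. Pi1 h uv l \<tau> * sum_of_exponentials Nexp s \<omega> (real n * h - \<tau>))"
      by (rule sym)
  qed
  finally have sum_U: "(\<Sum>i = 1..Nexp. \<omega> i * Uhist h uv (s i) n) = \<dots>" .
  have "Gamma (1 - \<alpha>) \<noteq> 0" using Gamma_real_pos[of "1 - \<alpha>"] \<alpha> by (metis diff_gt_0_iff_gt less_irrefl)
  moreover have "h powr \<alpha> \<noteq> 0" "1 - \<alpha> \<noteq> 0" using \<alpha> h by auto
  ultimately show ?thesis
    unfolding fast_caputo_def Gamma_2_minus[OF \<alpha>] sum_U by (simp add: field_simps)
qed

lemma Gamma_mult_caputo_split:
  fixes u du ddu :: "real \<Rightarrow> real"
  assumes \<alpha>: "0 < \<alpha>" "\<alpha> < 1" and h: "0 < h" and n: "1 \<le> n"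
    and d1: "\<And>x. x \<in> {0 .. real n * h} \<Longrightarrow> (u has_real_derivative du x) (at x within {0 .. real n * h})"
    and d2: "\<And>x. x \<in> {0 .. real n * h} \<Longrightarrow> (du has_real_derivative ddu x) (at x within {0 .. real n * h})"
    and M: "\<And>x. x \<in> {0 .. real n * h} \<Longrightarrow> \<bar>ddu x\<bar> \<le> M"
  obtains R where
    "Gamma (1 - \<alpha>) * caputo \<alpha> du (real n * h)
       = (u (real n * h) - u (real (n - 1) * h)) / (h powr \<alpha> * (1 - \<alpha>))
         + u (real (n - 1) * h) / h powr \<alpha> - u 0 / (real n * h) powr \<alpha>
         - \<alpha> * (\<Sum>l = 1..n - 1. integral (grid_cell h l) (\<lambda>\<tau>. u \<tau> * (real n * h - \<tau>) powr (- \<alpha> - 1))) + R"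
    "\<bar>R\<bar> \<le> \<alpha> * M / 2 * (h powr (2 - \<alpha>) / ((1 - \<alpha>) * (2 - \<alpha>)))"
proof -
  define tn b where "tn = real n * h" and "b = real (n - 1) * h"
  have b: "0 \<le> b" "b < tn" "tn - b = h" using n h by (simp_all add: tn_def b_def of_nat_diff algebra_simps)
  have sub: "{b..tn} \<subseteq> {0..tn}" "{0..b} \<subseteq> {0..tn}" using b by auto
  have d1': "(u has_real_derivative du x) (at x within S)" if "S \<subseteq> {0..tn}" "x \<in> S" for S x
    using that d1[of x] DERIV_subset unfolding tn_def by blast
  have d2': "(du has_real_derivative ddu x) (at x within S)" if "S \<subseteq> {0..tn}" "x \<in> S" for S x
    using that d2[of x] DERIV_subset unfolding tn_def by blast
  have M': "\<bar>ddu x\<bar> \<le> M" if "S \<subseteq> {0..tn}" "x \<in> S" for S x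
    using that M[of x] unfolding tn_def by blast
  obtain R where last: "((\<lambda>\<tau>. du \<tau> * (tn - \<tau>) powr (- \<alpha>)) has_integral
        (u tn - u b) / h * (h powr (1 - \<alpha>) / (1 - \<alpha>)) + R) {b..tn}"
      and R: "\<bar>R\<bar> \<le> \<alpha> * M / 2 * (h powr (2 - \<alpha>) / ((1 - \<alpha>) * (2 - \<alpha>)))"
    by (rule L1_last_cell_error[OF b(2) \<alpha> d1'[OF sub(1)] d2'[OF sub(1)] M'[OF sub(1)], unfolded b(3)])
  note history = has_integral_by_parts_kernel[OF b(1,2) d1'[OF sub(2)], of \<alpha>, unfolded b(3) diff_zero]
  have "integral {0..tn} (\<lambda>\<tau>. du \<tau> * (tn - \<tau>) powr (- \<alpha>))
      = u b * h powr (- \<alpha>) - u 0 * tn powr (- \<alpha>)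
        - \<alpha> * integral {0..b} (\<lambda>\<tau>. u \<tau> * (tn - \<tau>) powr (- \<alpha> - 1))
        + ((u tn - u b) / h * (h powr (1 - \<alpha>) / (1 - \<alpha>)) + R)"
    by (rule integral_unique[OF has_integral_combine[OF b(1) less_imp_le[OF b(2)] history last]])
  moreover have "integral {0..b} (\<lambda>\<tau>. u \<tau> * (tn - \<tau>) powr (- \<alpha> - 1))
      = (\<Sum>l = 1..n - 1. integral (grid_cell h l) (\<lambda>\<tau>. u \<tau> * (tn - \<tau>) powr (- \<alpha> - 1)))"
    unfolding b_def
  proof (rule integral_grid_cells)
    have "continuous_on {0..b} u" using d1'[OF sub(2)] by (rule DERIV_continuous_on)
    then show "(\<lambda>\<tau>. u \<tau> * (tn - \<tau>) powr (- \<alpha> - 1)) integrable_on {0..real (n - 1) * h}"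
      using b unfolding b_def[symmetric] by (intro integrable_continuous_interval continuous_intros) auto
  qed (use h in simp)
  moreover have "Gamma (1 - \<alpha>) * caputo \<alpha> du tn = integral {0..tn} (\<lambda>\<tau>. du \<tau> * (tn - \<tau>) powr (- \<alpha>))"
  proof -
    have "0 < Gamma (1 - \<alpha>)" using \<alpha> by simp
    then show ?thesis by (simp add: caputo_def powr_minus_divide divide_inverse)
  qed
  ultimately have "Gamma (1 - \<alpha>) * caputo \<alpha> du tn
      = u b * h powr (- \<alpha>) - u 0 * tn powr (- \<alpha>)
        - \<alpha> * (\<Sum>l = 1..n - 1. integral (grid_cell h l) (\<lambda>\<tau>. u \<tau> * (tn - \<tau>) powr (- \<alpha> - 1)))
        + ((u tn - u b) / h * (h powr (1 - \<alpha>) / (1 - \<alpha>)) + R)"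
    by simp
  also have "\<dots> = (u tn - u b) / (h powr \<alpha> * (1 - \<alpha>)) + u b / h powr \<alpha> - u 0 / tn powr \<alpha>
        - \<alpha> * (\<Sum>l = 1..n - 1. integral (grid_cell h l) (\<lambda>\<tau>. u \<tau> * (tn - \<tau>) powr (- \<alpha> - 1))) + R"
    using h by (simp add: powr_minus_divide powr_diff)
  finally show ?thesis using that[OF _ R] unfolding tn_def b_def by blast
qed

lemma interp_history_error_bound:
  fixes u du ddu :: "real \<Rightarrow> real"
  assumes \<alpha>: "0 < \<alpha>" "\<alpha> < 1" and h: "0 < h"
    and d1: "\<And>x. x \<in> {0 .. real n * h} \<Longrightarrow> (u has_real_derivative du x) (at x within {0 .. real n * h})"
    and d2: "\<And>x. x \<in> {0 .. real n * h} \<Longrightarrow> (du has_real_derivative ddu x) (at x within {0 .. real n * h})"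
    and M: "\<And>x. x \<in> {0 .. real n * h} \<Longrightarrow> \<bar>ddu x\<bar> \<le> M"
  shows "\<alpha> * \<bar>\<Sum>l = 1..n - 1. integral (grid_cell h l)
            (\<lambda>\<tau>. (u \<tau> - Pi1 h (\<lambda>k. u (real k * h)) l \<tau>) * (real n * h - \<tau>) powr (- \<alpha> - 1))\<bar>
         \<le> M * h powr (2 - \<alpha>) * (\<alpha> / 2 * penultimate_weight \<alpha> + 1 / 12)"
proof -
  define Q where "Q l = integral (grid_cell h l)
      (\<lambda>\<tau>. (\<tau> - real (l - 1) * h) * (real l * h - \<tau>) * (real n * h - \<tau>) powr (- \<alpha> - 1))" for l
  have M0: "0 \<le> M" using M[of 0] h by auto
  have cell: "\<bar>integral (grid_cell h l)
        (\<lambda>\<tau>. (u \<tau> - Pi1 h (\<lambda>k. u (real k * h)) l \<tau>) * (real n * h - \<tau>) powr (- \<alpha> - 1))\<bar> \<le> M / 2 * Q l"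
    if l: "l \<in> {1..n - 1}" for l
  proof -
    have sub: "grid_cell h l \<subseteq> {0 .. real n * h}" using l h by (intro grid_cell_subset) auto
    have "real (l - 1) * h < real l * h" "real l * h < real n * h"
      using l h by (auto simp: of_nat_diff)
    then have "\<bar>integral (grid_cell h l) (\<lambda>\<tau>. (u \<tau> - lin_interp u (real (l - 1) * h) (real l * h) \<tau>)
        * (real n * h - \<tau>) powr (- \<alpha> - 1))\<bar> \<le> M / 2 * Q l"
      unfolding Q_def
    proof (rule integral_interp_error_kernel_bound)
      fix y assume "y \<in> grid_cell h l"
      then have y: "y \<in> {0 .. real n * h}" using sub by blast
      show "(u has_real_derivative du y) (at y within grid_cell h l)" by (rule DERIV_subset[OF d1[OF y] sub])
      show "(du has_real_derivative ddu y) (at y within grid_cell h l)" by (rule DERIV_subset[OF d2[OF y] sub])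
      show "\<bar>ddu y\<bar> \<le> M" by (rule M[OF y])
    qed
    moreover have "1 \<le> l" using l by simp
    ultimately show ?thesis by (simp add: Pi1_eq_lin_interp)
  qed
  have "\<bar>\<Sum>l = 1..n - 1. integral (grid_cell h l)
      (\<lambda>\<tau>. (u \<tau> - Pi1 h (\<lambda>k. u (real k * h)) l \<tau>) * (real n * h - \<tau>) powr (- \<alpha> - 1))\<bar>
      \<le> M / 2 * (\<Sum>l = 1..n - 1. Q l)"
    unfolding sum_distrib_left by (rule order_trans[OF sum_abs sum_mono]) (rule cell)
  then have "\<alpha> * \<bar>\<Sum>l = 1..n - 1. integral (grid_cell h l)
      (\<lambda>\<tau>. (u \<tau> - Pi1 h (\<lambda>k. u (real k * h)) l \<tau>) * (real n * h - \<tau>) powr (- \<alpha> - 1))\<bar>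
      \<le> M * (\<alpha> / 2 * (\<Sum>l = 1..n - 1. Q l))"
    using mult_left_mono[of _ _ \<alpha>] \<alpha> by fastforce
  also have "\<dots> \<le> M * (h powr (2 - \<alpha>) * (\<alpha> / 2 * penultimate_weight \<alpha> + 1 / 12))"
    unfolding Q_def by (intro mult_left_mono bubble_kernel_history_sum h \<alpha> M0)
  finally show ?thesis by (simp only: mult.assoc)
qed

lemma soe_history_error_bound:
  assumes h: "0 < h"
    and K: "\<And>k. k \<le> n - 1 \<Longrightarrow> \<bar>uv k\<bar> \<le> K"
    and soe: "\<And>t. t \<in> {h .. real n * h} \<Longrightarrow> \<bar>t powr (- 1 - \<alpha>) - sum_of_exponentials Nexp s \<omega> t\<bar> \<le> \<epsilon>"
  shows "\<bar>\<Sum>l = 1..n - 1. integral (grid_cell h l) (\<lambda>\<tau>. Pi1 h uv l \<tau>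
            * ((real n * h - \<tau>) powr (- \<alpha> - 1) - sum_of_exponentials Nexp s \<omega> (real n * h - \<tau>)))\<bar>
         \<le> real (n - 1) * h * \<epsilon> * K"
proof -
  have cell: "\<bar>integral (grid_cell h l) (\<lambda>\<tau>. Pi1 h uv l \<tau>
      * ((real n * h - \<tau>) powr (- \<alpha> - 1) - sum_of_exponentials Nexp s \<omega> (real n * h - \<tau>)))\<bar> \<le> h * (K * \<epsilon>)"
    if l: "l \<in> {1..n - 1}" for l
  proof -
    have len: "real l * h - real (l - 1) * h = h" using l by (simp add: of_nat_diff algebra_simps)
    have gap: "real n * h - \<tau> \<in> {h .. real n * h}" if "\<tau> \<in> grid_cell h l" for \<tau>
    proof -
      have "0 \<le> real (l - 1) * h" "real (l - 1) * h \<le> \<tau>" "h \<le> real n * h - \<tau>"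
        using h that grid_cell_history_gap[OF l that] by auto
      then show ?thesis by auto
    qed
    have pointwise: "\<bar>Pi1 h uv l \<tau> * ((real n * h - \<tau>) powr (- \<alpha> - 1)
        - sum_of_exponentials Nexp s \<omega> (real n * h - \<tau>))\<bar> \<le> K * \<epsilon>"
      if \<tau>: "\<tau> \<in> grid_cell h l" for \<tau>
    proof -
      have "\<bar>Pi1 h uv l \<tau>\<bar> \<le> K" using l by (intro abs_Pi1_le h \<tau> K) auto
      moreover have "- 1 - \<alpha> = - \<alpha> - 1" by simp
      with soe[OF gap[OF \<tau>]]
      have "\<bar>(real n * h - \<tau>) powr (- \<alpha> - 1) - sum_of_exponentials Nexp s \<omega> (real n * h - \<tau>)\<bar> \<le> \<epsilon>"
        by (simp only:)
      ultimately show ?thesis unfolding abs_mult by (meson abs_ge_zero mult_mono order_trans)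
    qed
    have "\<forall>\<tau>\<in>grid_cell h l. real n * h - \<tau> \<noteq> 0" using gap h by fastforce
    then have "continuous_on (grid_cell h l) (\<lambda>\<tau>. (real n * h - \<tau>) powr (- \<alpha> - 1))"
      by (intro continuous_on_powr continuous_intros)
    moreover have "continuous_on (grid_cell h l) (Pi1 h uv l)"
      "continuous_on (grid_cell h l) (\<lambda>\<tau>. sum_of_exponentials Nexp s \<omega> (real n * h - \<tau>))"
      unfolding Pi1_def sum_of_exponentials_def using h by (auto intro!: continuous_intros)
    ultimately have "(\<lambda>\<tau>. Pi1 h uv l \<tau> * ((real n * h - \<tau>) powr (- \<alpha> - 1)
        - sum_of_exponentials Nexp s \<omega> (real n * h - \<tau>))) integrable_on grid_cell h l"
      by (intro integrable_continuous_interval continuous_on_mult continuous_on_diff)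
    then have "norm (integral (grid_cell h l) (\<lambda>\<tau>. Pi1 h uv l \<tau> * ((real n * h - \<tau>) powr (- \<alpha> - 1)
        - sum_of_exponentials Nexp s \<omega> (real n * h - \<tau>)))) \<le> integral (grid_cell h l) (\<lambda>\<tau>. K * \<epsilon>)"
      by (rule integral_norm_bound_integral) (simp_all add: pointwise integrable_const_ivl)
    also have "\<dots> = h * (K * \<epsilon>)" using len h by (simp add: content_real)
    finally show ?thesis by simp
  qed
  have "\<bar>\<Sum>l = 1..n - 1. integral (grid_cell h l) (\<lambda>\<tau>. Pi1 h uv l \<tau>
      * ((real n * h - \<tau>) powr (- \<alpha> - 1) - sum_of_exponentials Nexp s \<omega> (real n * h - \<tau>)))\<bar>
      \<le> of_nat (card {1..n - 1}) * (h * (K * \<epsilon>))"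
    by (rule order_trans[OF sum_abs sum_bounded_above]) (rule cell)
  then show ?thesis by (simp add: mult_ac)
qed

lemma Gamma_mult_fast_caputo_error:
  fixes u du ddu :: "real \<Rightarrow> real"
  assumes \<alpha>: "0 < \<alpha>" "\<alpha> < 1" and h: "0 < h" and n: "1 \<le> n"
    and d1: "\<And>x. x \<in> {0 .. real n * h} \<Longrightarrow> (u has_real_derivative du x) (at x within {0 .. real n * h})"
    and d2: "\<And>x. x \<in> {0 .. real n * h} \<Longrightarrow> (du has_real_derivative ddu x) (at x within {0 .. real n * h})"
    and M: "\<And>x. x \<in> {0 .. real n * h} \<Longrightarrow> \<bar>ddu x\<bar> \<le> M"
  obtains R where
    "Gamma (1 - \<alpha>) * (caputo \<alpha> du (real n * h) - fast_caputo \<alpha> h Nexp s \<omega> (\<lambda>k. u (real k * h)) n)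
       = R - \<alpha> * (\<Sum>l = 1..n - 1. integral (grid_cell h l)
                  (\<lambda>\<tau>. (u \<tau> - Pi1 h (\<lambda>k. u (real k * h)) l \<tau>) * (real n * h - \<tau>) powr (- \<alpha> - 1)))
           - \<alpha> * (\<Sum>l = 1..n - 1. integral (grid_cell h l) (\<lambda>\<tau>. Pi1 h (\<lambda>k. u (real k * h)) l \<tau>
                  * ((real n * h - \<tau>) powr (- \<alpha> - 1) - sum_of_exponentials Nexp s \<omega> (real n * h - \<tau>))))"
    "\<bar>R\<bar> \<le> \<alpha> * M / 2 * (h powr (2 - \<alpha>) / ((1 - \<alpha>) * (2 - \<alpha>)))"
proof -
  define uv where "uv = (\<lambda>k. u (real k * h))"
  define K E where "K \<tau> = (real n * h - \<tau>) powr (- \<alpha> - 1)"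
    and "E \<tau> = sum_of_exponentials Nexp s \<omega> (real n * h - \<tau>)" for \<tau>
  obtain R where caputo: "Gamma (1 - \<alpha>) * caputo \<alpha> du (real n * h)
       = (u (real n * h) - u (real (n - 1) * h)) / (h powr \<alpha> * (1 - \<alpha>))
         + u (real (n - 1) * h) / h powr \<alpha> - u 0 / (real n * h) powr \<alpha>
         - \<alpha> * (\<Sum>l = 1..n - 1. integral (grid_cell h l) (\<lambda>\<tau>. u \<tau> * K \<tau>)) + R"
    and R: "\<bar>R\<bar> \<le> \<alpha> * M / 2 * (h powr (2 - \<alpha>) / ((1 - \<alpha>) * (2 - \<alpha>)))"
    unfolding K_def by (rule Gamma_mult_caputo_split[OF \<alpha> h n d1 d2 M])
  have fast: "Gamma (1 - \<alpha>) * fast_caputo \<alpha> h Nexp s \<omega> uv n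
    = (uv n - uv (n - 1)) / (h powr \<alpha> * (1 - \<alpha>)) + uv (n - 1) / h powr \<alpha> - uv 0 / (real n * h) powr \<alpha>
      - \<alpha> * (\<Sum>l = 1..n - 1. integral (grid_cell h l) (\<lambda>\<tau>. Pi1 h uv l \<tau> * E \<tau>))"
    unfolding E_def by (rule Gamma_mult_fast_caputo[OF \<alpha>(2) h])
  have cu: "continuous_on {0 .. real n * h} u" using d1 by (rule DERIV_continuous_on)
  have cell: "integral (grid_cell h l) (\<lambda>\<tau>. u \<tau> * K \<tau>) - integral (grid_cell h l) (\<lambda>\<tau>. Pi1 h uv l \<tau> * E \<tau>)
      = integral (grid_cell h l) (\<lambda>\<tau>. (u \<tau> - Pi1 h uv l \<tau>) * K \<tau>)
        + integral (grid_cell h l) (\<lambda>\<tau>. Pi1 h uv l \<tau> * (K \<tau> - E \<tau>))"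
    if l: "l \<in> {1..n - 1}" for l
  proof -
    have "continuous_on (grid_cell h l) u"
      using l h by (intro continuous_on_subset[OF cu] grid_cell_subset) auto
    moreover have "continuous_on (grid_cell h l) K"
      unfolding K_def using h grid_cell_history_gap[OF l] by (intro continuous_intros) force+
    moreover have "continuous_on (grid_cell h l) (Pi1 h uv l)" "continuous_on (grid_cell h l) E"
      unfolding Pi1_def E_def sum_of_exponentials_def using h by (auto intro!: continuous_intros)
    ultimately show ?thesis
      by (simp add: integral_add[symmetric] integral_diff[symmetric] integrable_continuous_interval
          continuous_intros algebra_simps)
  qed
  have "(\<Sum>l = 1..n - 1. integral (grid_cell h l) (\<lambda>\<tau>. u \<tau> * K \<tau>))
      - (\<Sum>l = 1..n - 1. integral (grid_cell h l) (\<lambda>\<tau>. Pi1 h uv l \<tau> * E \<tau>))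
      = (\<Sum>l = 1..n - 1. integral (grid_cell h l) (\<lambda>\<tau>. (u \<tau> - Pi1 h uv l \<tau>) * K \<tau>))
        + (\<Sum>l = 1..n - 1. integral (grid_cell h l) (\<lambda>\<tau>. Pi1 h uv l \<tau> * (K \<tau> - E \<tau>)))"
    unfolding sum_subtractf[symmetric] sum.distrib[symmetric] by (rule sum.cong[OF refl cell])
  then show ?thesis
    using that[OF _ R] caputo fast unfolding uv_def K_def E_def by (simp add: algebra_simps)
qed

lemma L1_error_constant_eq:
  fixes \<alpha> M P :: real
  assumes \<alpha>: "0 < \<alpha>" "\<alpha> < 1"
  shows "\<alpha> * M / 2 * (P / ((1 - \<alpha>) * (2 - \<alpha>))) + M * P * (\<alpha> / 2 * penultimate_weight \<alpha> + 1 / 12)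
     = M * P * ((1 - \<alpha>) / 12 + 2 powr (2 - \<alpha>) / (2 - \<alpha>) - (1 + 2 powr (- \<alpha>))) / (1 - \<alpha>)"
proof -
  have "(2::real) powr (2 - \<alpha>) = 4 * 2 powr (- \<alpha>)"
    using powr_add[of 2 2 "- \<alpha>"] by simp
  then have "\<alpha> / (2 * (1 - \<alpha>) * (2 - \<alpha>)) + \<alpha> / 2 * penultimate_weight \<alpha> + 1 / 12
      = ((1 - \<alpha>) / 12 + 2 powr (2 - \<alpha>) / (2 - \<alpha>) - (1 + 2 powr (- \<alpha>))) / (1 - \<alpha>)"
    using \<alpha> by (simp add: penultimate_weight_def divide_simps) (simp add: algebra_simps)
  moreover have "\<alpha> * M / 2 * (P / ((1 - \<alpha>) * (2 - \<alpha>))) + M * P * (\<alpha> / 2 * penultimate_weight \<alpha> + 1 / 12)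
      = M * P * (\<alpha> / (2 * (1 - \<alpha>) * (2 - \<alpha>)) + \<alpha> / 2 * penultimate_weight \<alpha> + 1 / 12)"
    using \<alpha> by (simp add: field_simps)
  ultimately show ?thesis by simp
qed

theorem fast_caputo_error_grid:
  fixes u du ddu :: "real \<Rightarrow> real"
  assumes \<alpha>: "0 < \<alpha>" "\<alpha> < 1" and h: "0 < h" and n: "1 \<le> n"
    and d1: "\<And>x. x \<in> {0 .. real n * h} \<Longrightarrow> (u has_real_derivative du x) (at x within {0 .. real n * h})"
    and d2: "\<And>x. x \<in> {0 .. real n * h} \<Longrightarrow> (du has_real_derivative ddu x) (at x within {0 .. real n * h})"
    and M: "\<And>x. x \<in> {0 .. real n * h} \<Longrightarrow> \<bar>ddu x\<bar> \<le> M"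
    and K: "\<And>t. t \<in> {0 .. real (n - 1) * h} \<Longrightarrow> \<bar>u t\<bar> \<le> K"
    and soe: "\<And>t. t \<in> {h .. real n * h} \<Longrightarrow> \<bar>t powr (- 1 - \<alpha>) - sum_of_exponentials Nexp s \<omega> t\<bar> \<le> \<epsilon>"
  shows "\<bar>caputo \<alpha> du (real n * h) - fast_caputo \<alpha> h Nexp s \<omega> (\<lambda>k. u (real k * h)) n\<bar>
    \<le> h powr (2 - \<alpha>) / Gamma (2 - \<alpha>) * ((1 - \<alpha>) / 12 + 2 powr (2 - \<alpha>) / (2 - \<alpha>) - (1 + 2 powr (- \<alpha>))) * M
      + \<alpha> * \<epsilon> * (real (n - 1) * h) / Gamma (1 - \<alpha>) * K"
proof -
  define S H where
    "S = (\<Sum>l = 1..n - 1. integral (grid_cell h l)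
       (\<lambda>\<tau>. (u \<tau> - Pi1 h (\<lambda>k. u (real k * h)) l \<tau>) * (real n * h - \<tau>) powr (- \<alpha> - 1)))"
    and "H = (\<Sum>l = 1..n - 1. integral (grid_cell h l) (\<lambda>\<tau>. Pi1 h (\<lambda>k. u (real k * h)) l \<tau>
       * ((real n * h - \<tau>) powr (- \<alpha> - 1) - sum_of_exponentials Nexp s \<omega> (real n * h - \<tau>))))"
  define C where "C = (1 - \<alpha>) / 12 + 2 powr (2 - \<alpha>) / (2 - \<alpha>) - (1 + 2 powr (- \<alpha>))"
  obtain R where err: "Gamma (1 - \<alpha>) * (caputo \<alpha> du (real n * h)
        - fast_caputo \<alpha> h Nexp s \<omega> (\<lambda>k. u (real k * h)) n) = R - \<alpha> * S - \<alpha> * H"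
    and R: "\<bar>R\<bar> \<le> \<alpha> * M / 2 * (h powr (2 - \<alpha>) / ((1 - \<alpha>) * (2 - \<alpha>)))"
    unfolding S_def H_def by (rule Gamma_mult_fast_caputo_error[OF \<alpha> h n d1 d2 M])
  have interp: "\<alpha> * \<bar>S\<bar> \<le> M * h powr (2 - \<alpha>) * (\<alpha> / 2 * penultimate_weight \<alpha> + 1 / 12)"
    unfolding S_def by (rule interp_history_error_bound[OF \<alpha> h d1 d2 M])
  have "\<bar>u (real k * h)\<bar> \<le> K" if "k \<le> n - 1" for k
    using that h by (intro K) (auto intro: mult_right_mono)
  from soe_history_error_bound[of h n "\<lambda>k. u (real k * h)", OF h this soe]
  have soe_err: "\<alpha> * \<bar>H\<bar> \<le> \<alpha> * \<epsilon> * (real (n - 1) * h) * K"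
    unfolding H_def using mult_left_mono[of _ _ \<alpha>] \<alpha> by (fastforce simp: mult_ac)
  note const = L1_error_constant_eq[OF \<alpha>, of M "h powr (2 - \<alpha>)", folded C_def]
  have "\<bar>\<alpha> * S\<bar> = \<alpha> * \<bar>S\<bar>" "\<bar>\<alpha> * H\<bar> = \<alpha> * \<bar>H\<bar>" using \<alpha> by (simp_all add: abs_mult)
  then have "\<bar>R - \<alpha> * S - \<alpha> * H\<bar> \<le> \<bar>R\<bar> + \<alpha> * \<bar>S\<bar> + \<alpha> * \<bar>H\<bar>"
    using abs_triangle_ineq4[of "R - \<alpha> * S" "\<alpha> * H"] abs_triangle_ineq4[of R "\<alpha> * S"] by linarith
  also have "\<dots> \<le> M * h powr (2 - \<alpha>) * C / (1 - \<alpha>) + \<alpha> * \<epsilon> * (real (n - 1) * h) * K"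
    using R interp soe_err const by linarith
  finally have "\<bar>Gamma (1 - \<alpha>) * (caputo \<alpha> du (real n * h) - fast_caputo \<alpha> h Nexp s \<omega> (\<lambda>k. u (real k * h)) n)\<bar>
      \<le> M * h powr (2 - \<alpha>) * C / (1 - \<alpha>) + \<alpha> * \<epsilon> * (real (n - 1) * h) * K"
    unfolding err .
  moreover have G: "0 < Gamma (1 - \<alpha>)" using \<alpha> by simp
  ultimately have "\<bar>caputo \<alpha> du (real n * h) - fast_caputo \<alpha> h Nexp s \<omega> (\<lambda>k. u (real k * h)) n\<bar>
      \<le> (M * h powr (2 - \<alpha>) * C / (1 - \<alpha>) + \<alpha> * \<epsilon> * (real (n - 1) * h) * K) / Gamma (1 - \<alpha>)"
    by (simp add: pos_le_divide_eq abs_mult mult.commute)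
  also have "\<dots> = h powr (2 - \<alpha>) / Gamma (2 - \<alpha>) * C * M + \<alpha> * \<epsilon> * (real (n - 1) * h) / Gamma (1 - \<alpha>) * K"
    unfolding Gamma_2_minus[OF \<alpha>(2)] by (simp add: add_divide_distrib divide_divide_eq_left mult_ac)
  finally show ?thesis unfolding C_def .
qed

theorem lemma2p7:
  fixes \<alpha> T \<epsilon> :: real and NT Nexp n :: nat
    and s \<omega> :: "nat \<Rightarrow> real" and u du ddu :: "real \<Rightarrow> real"
  assumes "0 < \<alpha>" "\<alpha> < 1" "0 < T" "0 < NT" "0 < \<epsilon>"
    and "\<forall>i\<in>{1..Nexp}. 0 < s i \<and> 0 < \<omega> i"
    and "\<forall>t\<in>{T / real NT .. T}.
           \<bar>t powr (- 1 - \<alpha>) - (\<Sum>i = 1..Nexp. \<omega> i * exp (- s i * t))\<bar> \<le> \<epsilon>"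
    and "1 \<le> n" "n \<le> NT"
    and "\<forall>x\<in>{0 .. real n * (T / real NT)}.
           (u has_real_derivative du x) (at x within {0 .. real n * (T / real NT)})"
    and "\<forall>x\<in>{0 .. real n * (T / real NT)}.
           (du has_real_derivative ddu x) (at x within {0 .. real n * (T / real NT)})"
    and "continuous_on {0 .. real n * (T / real NT)} ddu"
  shows "\<bar>caputo \<alpha> du (real n * (T / real NT))
           - fast_caputo \<alpha> (T / real NT) Nexp s \<omega> (\<lambda>k. u (real k * (T / real NT))) n\<bar>
         \<le> (T / real NT) powr (2 - \<alpha>) / Gamma (2 - \<alpha>)
             * ((1 - \<alpha>) / 12 + 2 powr (2 - \<alpha>) / (2 - \<alpha>) - (1 + 2 powr (- \<alpha>)))
             * (SUP t\<in>{0 .. real n * (T / real NT)}. \<bar>ddu t\<bar>)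
           + \<alpha> * \<epsilon> * (real (n - 1) * (T / real NT)) / Gamma (1 - \<alpha>)
             * (SUP t\<in>{0 .. real (n - 1) * (T / real NT)}. \<bar>u t\<bar>)"
proof -
  define h where "h = T / real NT"
  have h: "0 < h" using assms(3,4) by (simp add: h_def)
  have "real n * h \<le> T" using assms(3,4,9) by (simp add: h_def field_simps)
  then have soe: "\<bar>t powr (- 1 - \<alpha>) - sum_of_exponentials Nexp s \<omega> t\<bar> \<le> \<epsilon>" if "t \<in> {h .. real n * h}" for t
    using assms(7) that unfolding sum_of_exponentials_def h_def by auto
  note d1 = assms(10)[unfolded h_def[symmetric]] and d2 = assms(11)[unfolded h_def[symmetric]]
  have "continuous_on {0 .. real n * h} u" by (rule DERIV_continuous_on) (use d1 in blast)
  moreover have "{0 .. real (n - 1) * h} \<subseteq> {0 .. real n * h}"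
    using h by (auto intro: order_trans[OF _ mult_right_mono[of "real (n - 1)" "real n" h]])
  ultimately have cu: "continuous_on {0 .. real (n - 1) * h} u" by (rule continuous_on_subset)
  show ?thesis
    unfolding h_def[symmetric]
    using fast_caputo_error_grid[OF assms(1,2) h assms(8) bspec[OF d1] bspec[OF d2]
        abs_le_SUP_abs[OF assms(12)[unfolded h_def[symmetric]]] abs_le_SUP_abs[OF cu] soe] .
qed

end
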